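(* Let $(X,d,\kappa)$ be a digital metric space that is $\kappa$-connected, and suppose there are constants $M_1 \ge M_2 > 0$ such that for all $x,y\in X$, $x \ne y$ implies $d(x,y) \ge M_2$, and $x \leftrightarrow_\kappa y$ implies $d(x,y) \le M_1$. Let $f: X \to X$ be a digital contraction map with multiplier $\alpha$ such that $\alpha < M_2/M_1$. Then $f$ is a constant function.
   Context: A digital metric space is a triple $(X,d,\kappa)$ with $X\subset\mathbb{Z}^n$, $\kappa$ an adjacency relation on $X$ (written $x \leftrightarrow_\kappa y$), and $d$ a metric on $X$. $X$ is $\kappa$-connected if any two points are joined by a finite sequence of points of $X$ in which consecutive points are $\kappa$-adjacent. $f$ is a digital contraction map with multiplier $\alpha \in (0,1)$ if $d(f(x),f(y)) \le \alpha\, d(x,y)$ for all $x,y \in X$. *)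

theory Defs
  imports "HOL-Analysis.Analysis"
begin

text \<open>Points of Z^n are modelled as vectors int ^ 'n (dimension given by the finite type 'n).
  An adjacency relation is a binary relation kappa on points.\<close>

definition metric_on :: "'a set \<Rightarrow> ('a \<Rightarrow> 'a \<Rightarrow> real) \<Rightarrow> bool" where
  "metric_on X d \<longleftrightarrow>
     (\<forall>x\<in>X. \<forall>y\<in>X. 0 \<le> d x y \<and> (d x y = 0 \<longleftrightarrow> x = y) \<and> d x y = d y x) \<and>
     (\<forall>x\<in>X. \<forall>y\<in>X. \<forall>z\<in>X. d x z \<le> d x y + d y z)"

definition kappa_connected :: "'a set \<Rightarrow> ('a \<Rightarrow> 'a \<Rightarrow> bool) \<Rightarrow> bool" where
  "kappa_connected X kappa \<longleftrightarrow>
     (\<forall>x\<in>X. \<forall>y\<in>X. \<exists>p::'a list. p \<noteq> [] \<and> hd p = x \<and> last p = y \<and> set p \<subseteq> X \<and>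
        (\<forall>i. Suc i < length p \<longrightarrow> kappa (p ! i) (p ! Suc i)))"

definition digital_contraction :: "'a set \<Rightarrow> ('a \<Rightarrow> 'a \<Rightarrow> real) \<Rightarrow> real \<Rightarrow> ('a \<Rightarrow> 'a) \<Rightarrow> bool" where
  "digital_contraction X d \<alpha> f \<longleftrightarrow>
     0 < \<alpha> \<and> \<alpha> < 1 \<and> f ` X \<subseteq> X \<and>
     (\<forall>x\<in>X. \<forall>y\<in>X. d (f x) (f y) \<le> \<alpha> * d x y)"

end

theory Submission
  imports Defs
begin

text \<open>Adjacent points are at distance at most M1, so their images are at distance at most
  \<alpha> M1 < M2; as distinct points are at least M2 apart, the images coincide. Hence f is
  constant along every \<kappa>-path, and \<kappa>-connectedness makes it constant on X.\<close>

lemma kappa_connected_adjacency_invariant: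
  assumes "kappa_connected X kappa"
    and invariant: "\<And>x y. x \<in> X \<Longrightarrow> y \<in> X \<Longrightarrow> kappa x y \<Longrightarrow> g x = g y"
    and "x \<in> X" "y \<in> X"
  shows "g x = g y"
proof -
  obtain p where p: "p \<noteq> []" "hd p = x" "last p = y" and pX: "set p \<subseteq> X"
    and path: "\<forall>i. Suc i < length p \<longrightarrow> kappa (p ! i) (p ! Suc i)"
    using assms(1,3,4) unfolding kappa_connected_def by blast
  have along_path: "g (p ! i) = g (p ! 0)" if "i < length p" for i
    using that
  proof (induction i)
    case 0
    show ?case by simp
  next
    case (Suc i)
    have "p ! i \<in> X" "p ! Suc i \<in> X"
      using Suc.prems pX by (auto dest: nth_mem[of _ p])
    then have "g (p ! Suc i) = g (p ! i)"
      using invariant path Suc.prems by metis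
    then show ?case
      using Suc by simp
  qed
  have "g y = g (p ! 0)"
    using along_path[of "length p - 1"] p by (simp add: last_conv_nth)
  moreover have "g x = g (p ! 0)"
    using p by (simp add: hd_conv_nth)
  ultimately show ?thesis
    by simp
qed

lemma digital_contraction_identifies_adjacent:
  assumes "digital_contraction X d \<alpha> f"
    and separated: "\<forall>x\<in>X. \<forall>y\<in>X. x \<noteq> y \<longrightarrow> d x y \<ge> M2"
    and adjacent_close: "\<forall>x\<in>X. \<forall>y\<in>X. kappa x y \<longrightarrow> d x y \<le> M1"
    and "\<alpha> * M1 < M2"
    and "x \<in> X" "y \<in> X" "kappa x y"
  shows "f x = f y"
proof -
  have "\<alpha> > 0" and fX: "f ` X \<subseteq> X" and contracts: "d (f x) (f y) \<le> \<alpha> * d x y"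
    using assms(1,5,6) unfolding digital_contraction_def by auto
  have "\<alpha> * d x y \<le> \<alpha> * M1"
    using \<open>\<alpha> > 0\<close> adjacent_close assms(5-7) by simp
  then have "d (f x) (f y) < M2"
    using contracts \<open>\<alpha> * M1 < M2\<close> by linarith
  moreover have "f x \<in> X" "f y \<in> X"
    using fX assms(5,6) by auto
  ultimately show ?thesis
    using separated by force
qed

theorem mainTheorem5:
  fixes X :: "(int ^ 'n) set"
    and d :: "int ^ 'n \<Rightarrow> int ^ 'n \<Rightarrow> real"
    and kappa :: "int ^ 'n \<Rightarrow> int ^ 'n \<Rightarrow> bool"
    and f :: "int ^ 'n \<Rightarrow> int ^ 'n"
    and M1 M2 \<alpha> :: real
  assumes "metric_on X d"
    and "kappa_connected X kappa"
    and "M1 \<ge> M2" and "M2 > 0"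
    and "\<forall>x\<in>X. \<forall>y\<in>X. x \<noteq> y \<longrightarrow> d x y \<ge> M2"
    and "\<forall>x\<in>X. \<forall>y\<in>X. kappa x y \<longrightarrow> d x y \<le> M1"
    and "digital_contraction X d \<alpha> f"
    and "\<alpha> < M2 / M1"
  shows "\<exists>c. \<forall>x\<in>X. f x = c"
proof -
  have "M1 > 0"
    using assms(3,4) by linarith
  then have "\<alpha> * M1 < M2"
    using assms(8) by (simp add: pos_less_divide_eq)
  then have same_image: "f x = f y" if "x \<in> X" "y \<in> X" for x y
    using kappa_connected_adjacency_invariant[OF assms(2) _ that]
      digital_contraction_identifies_adjacent[OF assms(7,5,6)] by blast
  show ?thesis
  proof (cases "X = {}")
    case False
    then obtain x0 where "x0 \<in> X"
      by blast
    then show ?thesis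
      using same_image by blast
  qed simp
qed

end
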